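(* Let $\equiv_2$ be the equivalence relation on $\mathfrak S_n$ generated by the relations $bac\equiv_2 bca$ and $abc\equiv_2 acb$ for letters $a<b<c$ in three consecutive positions. For every $\sigma\in\mathfrak S_n$, the set of linear extensions of the poset $P_2(\sigma)$ (equivalently, words listing the values $1,\ldots,n$ once each in which every vertex of the tree $P_2(\sigma)$ appears to the right of its parent) is exactly the $\equiv_2$-class of $\sigma$.
   Context: For $\sigma=\sigma_1\cdots\sigma_n\in\mathfrak S_n$, let $m_1>m_2>\cdots>m_k=1$ be the left-to-right minima of $\sigma$, i.e. the values $\sigma_j$ all of whose left neighbours in the word are greater, listed from left to right. $P_2(\sigma)$ is the poset whose Hasse diagram is the rooted tree obtained as follows: the chain $m_1,m_2,\ldots,m_k$ with $m_1$ at the top (root), each $m_{i+1}$ a child of $m_i$; every other value $\sigma_j$ is attached as a leaf (child) of the topmost chain element $m_i$ with $m_i<\sigma_j$. Example: for $\sigma=739465281$ the chain is $7,3,2,1$, the values $8,9$ are leaves of $7$, and $4,5,6$ are leaves of $3$. *)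

theory Defs
  imports Main
begin

definition perms :: "nat \<Rightarrow> nat list set" where
  "perms n = {w. distinct w \<and> set w = {1..n}}"

definition step2 :: "nat list \<Rightarrow> nat list \<Rightarrow> bool" where
  "step2 x y \<longleftrightarrow> (\<exists>u v a b c. a < b \<and> b < c \<and>
      ((x = u @ [b, a, c] @ v \<and> y = u @ [b, c, a] @ v) \<or>
       (x = u @ [a, b, c] @ v \<and> y = u @ [a, c, b] @ v)))"

definition equiv2 :: "nat list \<Rightarrow> nat list \<Rightarrow> bool" where
  "equiv2 = (symclp step2)\<^sup>*\<^sup>*"

definition lrmin :: "nat list \<Rightarrow> nat list" where
  "lrmin s = [s ! j. j \<leftarrow> [0..<length s], \<forall>i<j. s ! j < s ! i]"

text \<open>Edges (parent, child) of the rooted tree P_2(s).\<close>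
definition P2_edges :: "nat list \<Rightarrow> (nat \<times> nat) set" where
  "P2_edges s =
     {(lrmin s ! i, lrmin s ! Suc i) | i. Suc i < length (lrmin s)} \<union>
     {(hd (filter (\<lambda>m. m < v) (lrmin s)), v) | v. v \<in> set s \<and> v \<notin> set (lrmin s)}"

definition P2_less :: "nat list \<Rightarrow> (nat \<times> nat) set" where
  "P2_less s = (P2_edges s)\<^sup>+"

definition lin_ext :: "nat list \<Rightarrow> nat list \<Rightarrow> bool" where
  "lin_ext s w \<longleftrightarrow> (\<forall>i<length w. \<forall>j<length w. (w ! i, w ! j) \<in> P2_less s \<longrightarrow> i < j)"

end

theory Submission
  imports Defs
begin

text \<open>Both sides consist of the words on the letters of \<open>\<sigma>\<close> with the same sequence of
  left-to-right minima as \<open>\<sigma>\<close>.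

  Each move swaps the maximum \<open>c\<close> of a triple with a smaller neighbour, both behind the first
  letter of the triple, which is smaller than \<open>c\<close>. So \<open>c\<close> is a left-to-right minimum in neither
  word, and the other swapped letter only gains or loses \<open>c\<close> as a predecessor: moves keep the
  left-to-right minima. Conversely, appending the letters one by one and sliding each new letter
  leftwards into place, every word is equivalent to its left-to-right minima followed by its other
  letters in increasing order.

  In the tree \<open>P\<^sub>2(\<sigma>)\<close> every letter smaller than a chain element lies below it, and the parent
  of a leaf \<open>v\<close> is the largest chain element below \<open>v\<close>. Hence in a linear extension a chain
  element is preceded only by larger letters, whereas a leaf is preceded by its smaller parent: the
  left-to-right minima are exactly the chain. Conversely, if the left-to-right minima form the
  chain, a leaf \<open>v\<close> is preceded by a smaller letter, hence by a left-to-right minimum below \<open>v\<close>,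
  hence by its parent.\<close>

section \<open>Relative order of letters in a word\<close>

definition precedes :: "'a list \<Rightarrow> 'a \<Rightarrow> 'a \<Rightarrow> bool" where
  "precedes w a b \<longleftrightarrow> (\<exists>i j. i < j \<and> j < length w \<and> w ! i = a \<and> w ! j = b)"

lemma precedes_nth_iff:
  assumes "distinct w" "i < length w" "j < length w"
  shows "precedes w (w ! i) (w ! j) \<longleftrightarrow> i < j"
  using assms by (auto simp: precedes_def nth_eq_iff_index_eq)

lemma precedes_in_set: "precedes w a b \<Longrightarrow> a \<in> set w \<and> b \<in> set w"
  by (auto simp: precedes_def)

lemma precedes_trans:
  "distinct w \<Longrightarrow> precedes w a b \<Longrightarrow> precedes w b c \<Longrightarrow> precedes w a c"
  unfolding precedes_def by (metis nth_eq_iff_index_eq order.strict_trans)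

lemma precedes_asym: "distinct w \<Longrightarrow> precedes w a b \<Longrightarrow> \<not> precedes w b a"
  unfolding precedes_def by (metis nth_eq_iff_index_eq order.strict_trans less_irrefl)

lemma precedes_total:
  "a \<in> set w \<Longrightarrow> b \<in> set w \<Longrightarrow> a \<noteq> b \<Longrightarrow> precedes w a b \<or> precedes w b a"
  unfolding precedes_def in_set_conv_nth by (metis linorder_neqE_nat)

lemma precedes_trancl:
  assumes "distinct w" "\<And>a b. (a, b) \<in> E \<Longrightarrow> precedes w a b" "(a, b) \<in> E\<^sup>+"
  shows "precedes w a b"
  using assms(3)
proof induction
  case (base b)
  then show ?case
    by (rule assms(2))
next
  case (step b c)
  show ?case
    using precedes_trans[OF assms(1) step.IH assms(2)[OF step.hyps(2)]] .
qed

section \<open>Left-to-right minima\<close>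

lemma lrmin_snoc:
  "lrmin (xs @ [x]) = lrmin xs @ (if \<forall>y\<in>set xs. x < y then [x] else [])"
proof -
  have prefix: "map (\<lambda>j. if \<forall>i<j. (xs @ [x]) ! j < (xs @ [x]) ! i then [(xs @ [x]) ! j] else [])
      [0..<length xs] = map (\<lambda>j. if \<forall>i<j. xs ! j < xs ! i then [xs ! j] else []) [0..<length xs]"
    by (rule map_cong) (auto simp: nth_append)
  have last: "(\<forall>i<length xs. x < (xs @ [x]) ! i) \<longleftrightarrow> (\<forall>y\<in>set xs. x < y)"
    by (simp add: nth_append all_set_conv_all_nth)
  show ?thesis
    unfolding lrmin_def by (simp add: prefix last)
qed

lemma lrmin_Nil [simp]: "lrmin [] = []"
  by (simp add: lrmin_def)

lemma lrmin_append:
  "lrmin (u @ v) = lrmin u @ lrmin (filter (\<lambda>y. \<forall>z\<in>set u. y < z) v)"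
proof (induction v rule: rev_induct)
  case (snoc x v)
  let ?P = "\<lambda>y. \<forall>z\<in>set u. y < z"
  have new_min: "(\<forall>y\<in>set (u @ v). x < y) \<longleftrightarrow> ?P x \<and> (\<forall>y\<in>set (filter ?P v). x < y)"
    by (auto simp: not_less) (meson not_less less_le_trans)
  have "lrmin (u @ v @ [x]) = lrmin (u @ v) @ (if \<forall>y\<in>set (u @ v). x < y then [x] else [])"
    using lrmin_snoc[of "u @ v" x] by simp
  also have "\<dots> = lrmin u @ lrmin (filter ?P (v @ [x]))"
    using snoc.IH new_min by (cases "?P x") (simp_all add: lrmin_snoc)
  finally show ?case
    by simp
qed simp

lemma lrmin_Cons [simp]: "lrmin (x # xs) = x # lrmin (filter (\<lambda>y. y < x) xs)"
  using lrmin_append[of "[x]" xs] lrmin_snoc[of "[]" x] by simp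

lemma lrmin_eq_Nil_iff [simp]: "lrmin w = [] \<longleftrightarrow> w = []"
  by (cases w) auto

lemma set_lrmin_subset: "set (lrmin s) \<subseteq> set s"
  by (induction s rule: rev_induct) (auto simp: lrmin_snoc)

lemma sorted_lrmin: "sorted_wrt (>) (lrmin s)"
  by (induction s rule: rev_induct) (use set_lrmin_subset in \<open>auto simp: lrmin_snoc sorted_wrt_append\<close>)

lemma last_lrmin: "s \<noteq> [] \<Longrightarrow> last (lrmin s) = Min (set s)"
proof (induction s rule: rev_induct)
  case (snoc x xs)
  show ?case
  proof (cases "xs = []")
    case False
    show ?thesis
    proof (cases "\<forall>y\<in>set xs. x < y")
      case True
      with \<open>xs \<noteq> []\<close> show ?thesis
        by (simp add: lrmin_snoc min_def less_imp_le)
    next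
      case False
      then obtain y where "y \<in> set xs" "y \<le> x"
        by (auto simp: not_less)
      then have "Min (set xs) \<le> x"
        by (meson List.finite_set Min_le order.trans)
      with \<open>xs \<noteq> []\<close> have "Min (set (xs @ [x])) = Min (set xs)"
        by (simp add: min_absorb2)
      moreover from False have "lrmin (xs @ [x]) = lrmin xs"
        by (simp only: lrmin_snoc if_False append_Nil2)
      ultimately show ?thesis
        using snoc.IH \<open>xs \<noteq> []\<close> by simp
    qed
  qed simp
qed simp

lemma last_lrmin_less:
  assumes "v \<in> set s" "v \<notin> set (lrmin s)"
  shows "last (lrmin s) < v"
proof -
  have "s \<noteq> []"
    using assms(1) by auto
  then have "last (lrmin s) \<le> v"
    using last_lrmin assms(1) by simp
  moreover have "last (lrmin s) \<noteq> v"
    using assms(2) last_in_set[of "lrmin s"] \<open>s \<noteq> []\<close> by auto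
  ultimately show ?thesis
    by (rule le_neq_trans)
qed

lemma in_set_lrmin_iff:
  assumes "distinct w"
  shows "y \<in> set (lrmin w) \<longleftrightarrow> y \<in> set w \<and> (\<forall>z. precedes w z y \<longrightarrow> y < z)"
proof -
  have "set (lrmin w) = {w ! j | j. j < length w \<and> (\<forall>i<j. w ! j < w ! i)}"
    by (auto simp: lrmin_def split: if_splits)
  then show ?thesis
    using assms by (auto simp: precedes_def in_set_conv_nth nth_eq_iff_index_eq) blast+
qed

lemma lrmin_precedes:
  assumes "distinct w" "a \<in> set (lrmin w)" "b \<in> set (lrmin w)" "b < a"
  shows "precedes w a b"
  using assms precedes_total[of a w b] by (auto simp: in_set_lrmin_iff)

lemma lrmin_le_at_or_before:
  assumes "distinct w" "z \<in> set w"
  obtains m where "m \<in> set (lrmin w)" "m \<le> z" "m = z \<or> precedes w m z"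
proof
  let ?A = "insert z {x. precedes w x z}"
  have A_sub: "?A \<subseteq> set w"
    using assms(2) by (auto dest: precedes_in_set)
  then have "finite ?A"
    by (rule finite_subset) simp
  have Min_in_A: "Min ?A \<in> ?A"
    using \<open>finite ?A\<close> by (rule Min_in) simp
  have Min_le_A: "Min ?A \<le> x" if "x \<in> ?A" for x
    using \<open>finite ?A\<close> that by (rule Min_le)
  show "Min ?A \<le> z"
    by (simp add: Min_le_A)
  from Min_in_A show "Min ?A = z \<or> precedes w (Min ?A) z"
    by blast
  have "Min ?A < y" if "precedes w y (Min ?A)" for y
  proof -
    have "y \<in> ?A"
      using Min_in_A that precedes_trans[OF assms(1) that] by auto
    moreover have "y \<noteq> Min ?A"
      using that precedes_asym[OF assms(1)] by blast
    ultimately show ?thesis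
      using Min_le_A by force
  qed
  moreover have "Min ?A \<in> set w"
    using Min_in_A A_sub by blast
  ultimately show "Min ?A \<in> set (lrmin w)"
    using assms(1) by (simp add: in_set_lrmin_iff)
qed

section \<open>The equivalence \<open>\<equiv>\<^sub>2\<close>\<close>

lemma equivclp_invariant:
  assumes "\<And>x y. r x y \<Longrightarrow> f x = f y" "equivclp r x y"
  shows "f x = f y"
  using assms(2) by induction (auto dest: assms(1))

lemma equivclp_map:
  assumes "\<And>x y. r x y \<Longrightarrow> r (f x) (f y)" "equivclp r x y"
  shows "equivclp r (f x) (f y)"
  using assms(2) by induction (auto intro: assms(1) equivclp_into_equivclp)

lemma equiv2_eq_equivclp: "equiv2 = equivclp step2"
  by (simp add: equiv2_def equivclp_def)

lemma equiv2_refl [simp]: "equiv2 x x"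
  by (simp add: equiv2_eq_equivclp)

lemma equiv2_sym: "equiv2 x y \<Longrightarrow> equiv2 y x"
  unfolding equiv2_eq_equivclp by (rule equivclp_sym)

lemma equiv2_trans [trans]: "equiv2 x y \<Longrightarrow> equiv2 y z \<Longrightarrow> equiv2 x z"
  unfolding equiv2_eq_equivclp by (rule equivclp_trans)

lemma step2I:
  assumes "a < b" "b < c"
  shows "step2 (u @ [b, a, c] @ v) (u @ [b, c, a] @ v)"
    and "step2 (u @ [a, b, c] @ v) (u @ [a, c, b] @ v)"
  using assms unfolding step2_def by blast+

lemma lrmin_step2:
  assumes "step2 x y"
  shows "lrmin x = lrmin y"
proof -
  obtain u v a b c where abc: "a < b" "b < c" and
    xy: "(x = u @ [b, a, c] @ v \<and> y = u @ [b, c, a] @ v) \<or>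
         (x = u @ [a, b, c] @ v \<and> y = u @ [a, c, b] @ v)"
    using assms unfolding step2_def by blast
  define P where "P = (\<lambda>y. \<forall>z\<in>set u. y < z)"
  have split: "lrmin (u @ t @ v) = lrmin u @ lrmin (filter P t @ filter P v)" for t
    by (simp add: lrmin_append P_def)
  have "P c \<Longrightarrow> P b" "P b \<Longrightarrow> P a"
    using abc by (auto simp: P_def)
  then consider "\<not> P a" "\<not> P b" "\<not> P c" | "P a" "\<not> P b" "\<not> P c" | "P a" "P b" "\<not> P c" | "P a" "P b" "P c"
    by blast
  then have triple: "lrmin (filter P [b, a, c] @ filter P v) = lrmin (filter P [b, c, a] @ filter P v)"
    "lrmin (filter P [a, b, c] @ filter P v) = lrmin (filter P [a, c, b] @ filter P v)"
    using abc by (cases; simp)+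
  from xy show ?thesis
    using split[of "[b, a, c]"] split[of "[b, c, a]"] split[of "[a, b, c]"] split[of "[a, c, b]"] triple
    by (elim disjE conjE) simp_all
qed

lemma equiv2_invariants:
  assumes "equiv2 x y"
  shows "lrmin x = lrmin y \<and> set x = set y \<and> distinct x = distinct y"
proof -
  have "(lrmin x, set x, distinct x) = (lrmin y, set y, distinct y)"
    using assms unfolding equiv2_eq_equivclp
  proof (rule equivclp_invariant[rotated])
    fix x y
    assume "step2 x y"
    moreover from this have "set x = set y \<and> distinct x = distinct y"
      by (auto simp: step2_def)
    ultimately show "(lrmin x, set x, distinct x) = (lrmin y, set y, distinct y)"
      by (simp add: lrmin_step2)
  qed
  then show ?thesis
    by simp
qed

lemma equiv2_append_cong:
  assumes "equiv2 x y"
  shows "equiv2 (p @ x @ q) (p @ y @ q)"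
proof -
  have "step2 (p @ x @ q) (p @ y @ q)" if "step2 x y" for x y
  proof -
    from that obtain u v a b c where abc: "a < b" "b < c" and
      "(x = u @ [b, a, c] @ v \<and> y = u @ [b, c, a] @ v) \<or>
       (x = u @ [a, b, c] @ v \<and> y = u @ [a, c, b] @ v)"
      unfolding step2_def by blast
    then show ?thesis
      using step2I[OF abc, of "p @ u" "v @ q"] by auto
  qed
  with assms show ?thesis
    unfolding equiv2_eq_equivclp by (rule equivclp_map[rotated])
qed

text \<open>Both kinds of move swap the last two letters of a triple whose first letter is not its maximum.\<close>

lemma equiv2_swap:
  assumes "distinct [x, y, z]" "x < y \<or> x < z"
  shows "equiv2 (p @ [x, y, z] @ q) (p @ [x, z, y] @ q)"
proof -
  have swap: "step2 (p @ [x, y, z] @ q) (p @ [x, z, y] @ q)" if "y < z" "x < z" "x \<noteq> y" for x y z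
  proof (cases "x < y")
    case True
    with that show ?thesis
      by (intro step2I(2))
  next
    case False
    with that show ?thesis
      by (intro step2I(1)) auto
  qed
  have "step2 (p @ [x, y, z] @ q) (p @ [x, z, y] @ q) \<or> step2 (p @ [x, z, y] @ q) (p @ [x, y, z] @ q)"
  proof (cases y z rule: linorder_cases)
    case less
    with assms show ?thesis
      using swap[of y z x] by auto
  next
    case greater
    with assms show ?thesis
      using swap[of z y x] by auto
  qed (use assms in simp)
  then show ?thesis
    unfolding equiv2_eq_equivclp by blast
qed

lemma equiv2_move_left:
  assumes "sorted_wrt (<) (p # as)" "x \<notin> set (p # as)"
  shows "equiv2 (pre @ p # as @ x # r) (pre @ p # x # as @ r)"
  using assms
proof (induction as arbitrary: pre p)
  case (Cons a as)
  have "equiv2 (pre @ p # (a # as) @ x # r) ((pre @ [p]) @ a # x # as @ r)"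
    using Cons.IH[of a "pre @ [p]"] Cons.prems by simp
  also have "equiv2 \<dots> (pre @ [p, x, a] @ as @ r)"
    using equiv2_swap[of p a x pre "as @ r"] Cons.prems by simp
  finally show ?case
    by simp
qed simp

lemma equiv2_insort:
  assumes "sorted_wrt (<) (p # S)" "x \<notin> set (p # S)"
  shows "equiv2 (pre @ p # S @ x # r) (pre @ p # insort x S @ r)"
  using assms
proof (induction S arbitrary: pre p)
  case (Cons s S)
  show ?case
  proof (cases "x < s")
    case True
    then show ?thesis
      using equiv2_move_left[OF Cons.prems] by simp
  next
    case False
    then show ?thesis
      using Cons.IH[of s "pre @ [p]"] Cons.prems by simp
  qed
qed simp

definition lrmin_normal_form :: "nat list \<Rightarrow> nat list" where
  "lrmin_normal_form w = lrmin w @ sorted_list_of_set (set w - set (lrmin w))"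

lemma lrmin_normal_form_snoc:
  assumes "distinct (w @ [x])" "lrmin w = L @ [p]"
  shows "lrmin_normal_form (w @ [x]) = L @ p # insort x (sorted_list_of_set (set w - set (lrmin w)))"
proof (cases "\<forall>y\<in>set w. x < y")
  case True
  let ?R = "set w - set (lrmin w)"
  have "lrmin (w @ [x]) = L @ [p, x]"
    using True assms(2) by (simp add: lrmin_snoc)
  moreover have "set (w @ [x]) - set (L @ [p, x]) = ?R"
    using assms unfolding assms(2) by auto
  moreover have "insort x (sorted_list_of_set ?R) = x # sorted_list_of_set ?R"
  proof (rule insort_is_Cons, rule ballI)
    fix v
    assume "v \<in> set (sorted_list_of_set ?R)"
    then have "p < v"
      using last_lrmin_less[of v w] assms(2) by simp
    moreover have "p \<in> set w"
      using assms(2) set_lrmin_subset[of w] by auto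
    with True have "x < p"
      by blast
    ultimately show "x \<le> v"
      by simp
  qed
  ultimately show ?thesis
    by (simp add: lrmin_normal_form_def)
next
  case False
  then have "lrmin (w @ [x]) = lrmin w"
    by (simp only: lrmin_snoc if_False append_Nil2)
  moreover have "set (w @ [x]) - set (lrmin w) = insert x (set w - set (lrmin w))"
    using assms(1) set_lrmin_subset by auto
  ultimately show ?thesis
    using assms by (simp add: lrmin_normal_form_def sorted_list_of_set_insert_remove)
qed

lemma equiv2_lrmin_normal_form: "distinct w \<Longrightarrow> equiv2 w (lrmin_normal_form w)"
proof (induction w rule: rev_induct)
  case (snoc x w)
  show ?case
  proof (cases "w = []")
    case True
    then show ?thesis
      by (simp add: lrmin_normal_form_def)
  next
    case False
    then obtain L p where L: "lrmin w = L @ [p]"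
      by (metis lrmin_eq_Nil_iff rev_exhaust)
    let ?S = "sorted_list_of_set (set w - set (lrmin w))"
    have "p = last (lrmin w)" "p \<in> set w"
      using L set_lrmin_subset[of w] by auto
    then have sorted: "sorted_wrt (<) (p # ?S)"
      using last_lrmin_less by simp
    have new: "x \<notin> set (p # ?S)"
      using snoc.prems \<open>p \<in> set w\<close> by auto
    have "equiv2 (w @ [x]) (lrmin_normal_form w @ [x])"
      using snoc equiv2_append_cong[of w "lrmin_normal_form w" "[]" "[x]"] by simp
    also have "lrmin_normal_form w @ [x] = L @ p # ?S @ [x]"
      by (simp add: lrmin_normal_form_def L)
    also have "equiv2 \<dots> (L @ p # insort x ?S)"
      using equiv2_insort[OF sorted new, of L "[]"] by simp
    also have "\<dots> = lrmin_normal_form (w @ [x])"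
      using lrmin_normal_form_snoc[OF snoc.prems L] by simp
    finally show ?thesis .
  qed
qed (simp add: lrmin_normal_form_def)

lemma equiv2_iff_lrmin_eq:
  assumes "distinct s"
  shows "equiv2 s w \<longleftrightarrow> distinct w \<and> set w = set s \<and> lrmin w = lrmin s"
proof
  assume "equiv2 s w"
  with assms show "distinct w \<and> set w = set s \<and> lrmin w = lrmin s"
    by (auto dest: equiv2_invariants)
next
  assume w: "distinct w \<and> set w = set s \<and> lrmin w = lrmin s"
  then have "lrmin_normal_form w = lrmin_normal_form s"
    by (simp add: lrmin_normal_form_def)
  then show "equiv2 s w"
    using equiv2_lrmin_normal_form[OF assms] equiv2_lrmin_normal_form[of w] w
    by (metis equiv2_sym equiv2_trans)
qed

section \<open>The tree \<open>P\<^sub>2\<close>\<close>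

lemma sorted_wrt_greater_imp:
  fixes xs :: "'a :: linorder list"
  assumes "sorted_wrt (>) xs" "sorted_wrt R xs" "a \<in> set xs" "b \<in> set xs" "b < a"
  shows "R a b"
  using assms by (induction xs) auto

lemma hd_filter_greatest:
  fixes xs :: "'a :: linorder list"
  assumes "sorted_wrt (>) xs" "x \<in> set xs" "P x"
  shows "hd (filter P xs) \<in> set xs" "P (hd (filter P xs))" "x \<le> hd (filter P xs)"
proof -
  have "filter P xs \<noteq> []"
    using assms(2,3) by (auto simp: filter_empty_conv)
  then obtain y ys where y: "filter P xs = y # ys"
    by (meson neq_Nil_conv)
  have "x \<in> set (filter P xs)"
    using assms(2,3) by simp
  then have "x \<in> set (y # ys)"
    by (simp only: y)
  moreover have "y \<in> set (filter P xs)"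
    using y by simp
  then have "y \<in> set xs" "P y"
    by simp_all
  moreover have "sorted_wrt (>) (y # ys)"
    using sorted_wrt_filter[OF assms(1), of P] y by simp
  ultimately show "hd (filter P xs) \<in> set xs" "P (hd (filter P xs))" "x \<le> hd (filter P xs)"
    using y by auto
qed

definition P2_parent :: "nat list \<Rightarrow> nat \<Rightarrow> nat" where
  "P2_parent s v = hd (filter (\<lambda>m. m < v) (lrmin s))"

lemma P2_parent_lrmin:
  assumes "v \<in> set s" "v \<notin> set (lrmin s)"
  shows "P2_parent s v \<in> set (lrmin s)" "P2_parent s v < v"
    and "\<And>m. m \<in> set (lrmin s) \<Longrightarrow> m < v \<Longrightarrow> m \<le> P2_parent s v"
proof -
  have "last (lrmin s) \<in> set (lrmin s)"
    using assms(1) by (intro last_in_set) auto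
  moreover have "last (lrmin s) < v"
    using assms by (rule last_lrmin_less)
  ultimately show "P2_parent s v \<in> set (lrmin s)" "P2_parent s v < v"
    unfolding P2_parent_def
    using hd_filter_greatest[OF sorted_lrmin, where x = "last (lrmin s)" and P = "\<lambda>m. m < v"] by simp_all
  show "m \<le> P2_parent s v" if "m \<in> set (lrmin s)" "m < v" for m
    unfolding P2_parent_def using hd_filter_greatest[OF sorted_lrmin that(1), where P = "\<lambda>m. m < v"] that(2)
    by simp
qed

lemma P2_parent_edge:
  "v \<in> set s \<Longrightarrow> v \<notin> set (lrmin s) \<Longrightarrow> (P2_parent s v, v) \<in> P2_edges s"
  unfolding P2_edges_def P2_parent_def by blast

lemma P2_edgesE:
  assumes "(a, b) \<in> P2_edges s"
  obtains (chain) "a \<in> set (lrmin s)" "b \<in> set (lrmin s)" "b < a"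
    | (leaf) "b \<in> set s" "b \<notin> set (lrmin s)" "a = P2_parent s b"
  using assms unfolding P2_edges_def P2_parent_def
  by (auto simp: sorted_wrt_nth_less[OF sorted_lrmin])

lemma sorted_lrmin_P2_less: "sorted_wrt (\<lambda>a b. (a, b) \<in> P2_less s) (lrmin s)"
proof -
  have "successively (\<lambda>a b. (a, b) \<in> P2_edges s) (lrmin s)"
    unfolding successively_conv_nth P2_edges_def by blast
  then have "successively (\<lambda>a b. (a, b) \<in> P2_less s) (lrmin s)"
    unfolding P2_less_def by (rule successively_mono) auto
  moreover have "transp (\<lambda>a b. (a, b) \<in> P2_less s)"
    unfolding P2_less_def by (rule transpI) (rule trancl_trans)
  ultimately show ?thesis
    by (simp add: successively_conv_sorted_wrt)
qed

lemma P2_less_lrmin_greater: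
  assumes "y \<in> set (lrmin s)" "z \<in> set s" "z < y"
  shows "(y, z) \<in> P2_less s"
proof (cases "z \<in> set (lrmin s)")
  case True
  with assms show ?thesis
    using sorted_wrt_greater_imp[OF sorted_lrmin sorted_lrmin_P2_less] by blast
next
  case False
  let ?p = "P2_parent s z"
  have "(y, ?p) \<in> P2_less s"
    using P2_parent_lrmin[OF assms(2) False] assms(1,3)
    by (intro sorted_wrt_greater_imp[OF sorted_lrmin sorted_lrmin_P2_less]) auto
  moreover have "(?p, z) \<in> P2_edges s"
    using P2_parent_edge[OF assms(2) False] .
  ultimately show ?thesis
    unfolding P2_less_def by (rule trancl_into_trancl)
qed

lemma lin_ext_iff_precedes:
  assumes "distinct w"
  shows "lin_ext s w \<longleftrightarrow>
    (\<forall>a b. (a, b) \<in> P2_less s \<longrightarrow> a \<in> set w \<longrightarrow> b \<in> set w \<longrightarrow> precedes w a b)"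
  unfolding lin_ext_def in_set_conv_nth using precedes_nth_iff[OF assms] by blast

lemma lrmin_eqI:
  assumes "set (lrmin w) = set (lrmin s)"
  shows "lrmin w = lrmin s"
proof -
  have "rev (lrmin w) = rev (lrmin s)"
    using assms by (intro strict_sorted_equal) (simp_all add: sorted_wrt_rev sorted_lrmin)
  then show ?thesis
    by simp
qed

lemma lin_ext_imp_lrmin_subset:
  assumes "distinct w" "set w = set s" "lin_ext s w"
  shows "set (lrmin s) \<subseteq> set (lrmin w)"
proof
  fix y
  assume y: "y \<in> set (lrmin s)"
  then have "y \<in> set s"
    using set_lrmin_subset by blast
  have "y < z" if "precedes w z y" for z
  proof (rule ccontr)
    assume "\<not> y < z"
    moreover have "z \<noteq> y"
      using that precedes_asym[OF assms(1)] by blast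
    moreover have "z \<in> set s"
      using that assms(2) by (auto dest: precedes_in_set)
    ultimately have "(y, z) \<in> P2_less s"
      using y by (intro P2_less_lrmin_greater) auto
    with \<open>y \<in> set s\<close> \<open>z \<in> set s\<close> have "precedes w y z"
      using assms by (simp add: lin_ext_iff_precedes)
    with that show False
      using precedes_asym[OF assms(1)] by blast
  qed
  with \<open>y \<in> set s\<close> show "y \<in> set (lrmin w)"
    using assms(1,2) by (simp add: in_set_lrmin_iff)
qed

lemma lin_ext_imp_lrmin_supset:
  assumes "distinct w" "set w = set s" "lin_ext s w"
  shows "set (lrmin w) \<subseteq> set (lrmin s)"
proof
  fix y
  assume y: "y \<in> set (lrmin w)"
  show "y \<in> set (lrmin s)"
  proof (rule ccontr)
    assume "y \<notin> set (lrmin s)"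
    moreover have "y \<in> set s"
      using y set_lrmin_subset assms(2) by blast
    ultimately have "(P2_parent s y, y) \<in> P2_less s" "P2_parent s y \<in> set s" "P2_parent s y < y"
      using P2_parent_lrmin P2_parent_edge set_lrmin_subset unfolding P2_less_def by blast+
    with \<open>y \<in> set s\<close> have "precedes w (P2_parent s y) y"
      using assms by (simp add: lin_ext_iff_precedes)
    with y \<open>P2_parent s y < y\<close> show False
      using assms(1) by (auto simp: in_set_lrmin_iff)
  qed
qed

lemma precedes_P2_parent:
  assumes "distinct w" "set w = set s" "lrmin w = lrmin s" "b \<in> set s" "b \<notin> set (lrmin s)"
  shows "precedes w (P2_parent s b) b"
proof -
  let ?a = "P2_parent s b"
  have "b \<in> set w" "b \<notin> set (lrmin w)"
    using assms by auto
  then obtain z where z: "precedes w z b" "\<not> b < z"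
    using assms(1) by (auto simp: in_set_lrmin_iff)
  moreover have "z \<noteq> b"
    using z(1) precedes_asym[OF assms(1)] by blast
  ultimately have "z < b"
    by simp
  have "z \<in> set w"
    using z(1) by (auto dest: precedes_in_set)
  then obtain m where m: "m \<in> set (lrmin w)" "m \<le> z" "m = z \<or> precedes w m z"
    by (rule lrmin_le_at_or_before[OF assms(1)])
  have "precedes w m b"
    using m(3) z(1) precedes_trans[OF assms(1)] by blast
  have "m \<le> ?a"
    using P2_parent_lrmin(3)[OF assms(4,5)] m(1,2) \<open>z < b\<close> assms(3) by simp
  show ?thesis
  proof (cases "m = ?a")
    case False
    have "?a \<in> set (lrmin w)"
      using P2_parent_lrmin(1)[OF assms(4,5)] assms(3) by simp
    then have "precedes w ?a m"
      using m(1) False \<open>m \<le> ?a\<close> assms(1) lrmin_precedes by simp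
    with \<open>precedes w m b\<close> show ?thesis
      using precedes_trans[OF assms(1)] by blast
  qed (use \<open>precedes w m b\<close> in simp)
qed

lemma lin_ext_iff_lrmin_eq:
  assumes "distinct w" "set w = set s"
  shows "lin_ext s w \<longleftrightarrow> lrmin w = lrmin s"
proof
  assume "lin_ext s w"
  with assms show "lrmin w = lrmin s"
    using lin_ext_imp_lrmin_subset lin_ext_imp_lrmin_supset by (blast intro: lrmin_eqI)
next
  assume lrmin_eq: "lrmin w = lrmin s"
  have "precedes w a b" if "(a, b) \<in> P2_edges s" for a b
    using that
  proof (cases rule: P2_edgesE)
    case chain
    with assms lrmin_eq show ?thesis
      by (simp add: lrmin_precedes)
  next
    case leaf
    with assms lrmin_eq show ?thesis
      by (simp add: precedes_P2_parent)
  qed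
  then show "lin_ext s w"
    unfolding lin_ext_iff_precedes[OF assms(1)] P2_less_def
    using precedes_trancl[OF assms(1)] by blast
qed

theorem mainTheorem12:
  fixes n :: nat and \<sigma> :: "nat list"
  assumes "\<sigma> \<in> perms n"
  shows "{w \<in> perms n. lin_ext \<sigma> w} = {w. equiv2 \<sigma> w}"
proof -
  have \<sigma>: "distinct \<sigma>" "set \<sigma> = {1..n}"
    using assms by (simp_all add: perms_def)
  have "w \<in> perms n \<and> lin_ext \<sigma> w \<longleftrightarrow> equiv2 \<sigma> w" for w
  proof -
    have "w \<in> perms n \<and> lin_ext \<sigma> w \<longleftrightarrow> distinct w \<and> set w = set \<sigma> \<and> lin_ext \<sigma> w"
      using \<sigma> by (auto simp: perms_def)
    also have "\<dots> \<longleftrightarrow> distinct w \<and> set w = set \<sigma> \<and> lrmin w = lrmin \<sigma>"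
      using lin_ext_iff_lrmin_eq by blast
    also have "\<dots> \<longleftrightarrow> equiv2 \<sigma> w"
      using equiv2_iff_lrmin_eq[OF \<sigma>(1)] by simp
    finally show ?thesis .
  qed
  then show ?thesis
    by blast
qed

end
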